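(* Let $f$ be a Stokes vector field and $K$ a Mueller transform field, with rotation forms $\mathbf f$ and $\mathbf K$ respectively. Then the rotation form $\mathbf g$ of the Stokes vector field $K_{\mathcal F}[f]$ is given, for all $R_o\in SO(3)$, by $$\mathbf g(R_o)=\frac{1}{2\pi}\int_{SO(3)}\mathbf K(R_i,R_o)\,\mathbf f(R_i)\,dR_i.$$
   Context: Fix a right-handed orthonormal global frame $F_g=[\hat x_g,\hat y_g,\hat z_g]$ of $\mathbb R^3$; $S^2$ is the unit sphere with solid-angle measure $d\hat\omega$. A local frame at $\hat\omega$ is a right-handed orthonormal frame $F$ whose third axis is $\hat\omega$. A rotation $R$ acts on frames by $RF$ (rotating each axis). Stokes space. $\mathcal S_{\hat\omega}$ consists of classes $[\mathbf s]_F$ ($\mathbf s\in\mathbb R^4$, $F$ a local frame at $\hat\omega$) with $(\mathbf s,F)\sim(C(\vartheta)\mathbf s,F')$, where $F'$ is $F$ rotated by $\vartheta$ about $\hat\omega$. Here $C(\vartheta)$ is the identity on coordinates 0, 3 and acts on coordinates $(1,2)$ by $\begin{pmatrix}\cos2\vartheta&\sin2\vartheta\\-\sin2\vartheta&\cos2\vartheta\end{pmatrix}$. $[s]^F$ denotes the component vector of $s$ with respect to $F$. A Stokes vector field $f$ assigns $f(\hat\omega)\in\mathcal S_{\hat\omega}$ to each $\hat\omega$. Mueller transform fields. A Mueller transform field $K$ assigns to each $(\hat\omega_i,\hat\omega_o)$ a real linear map $K(\hat\omega_i,\hat\omega_o):\mathcal S_{\hat\omega_i}\to\mathcal S_{\hat\omega_o}$.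 Its Mueller matrix $[N]^{F_i\to F_o}$ is defined by $[Ns]^{F_o}=[N]^{F_i\to F_o}[s]^{F_i}$. The induced operator is $K_{\mathcal F}[f](\hat\omega_o)=\int_{S^2}K(\hat\omega_i,\hat\omega_o)f(\hat\omega_i)d\hat\omega_i$. Rotation forms. The rotation form of a Stokes vector field $f$ is $\mathbf f:SO(3)\to\mathbb R^4$, $\mathbf f(R)=[f(R\hat z_g)]^{RF_g}$. The rotation form of $K$ is $\mathbf K:SO(3)\times SO(3)\to\mathbb R^{4\times4}$, $\mathbf K(R_i,R_o)=[K(R_i\hat z_g,R_o\hat z_g)]^{R_iF_g\to R_oF_g}$. Measure on $SO(3)$. $\int_{SO(3)}h(R)\,dR=\int_0^{2\pi}\int_0^\pi\int_0^{2\pi}h(R_{\hat z_g}(\alpha)R_{\hat y_g}(\beta)R_{\hat z_g}(\gamma))\sin\beta\,d\alpha\,d\beta\,d\gamma$, where $R_{\hat u}(t)$ is rotation by angle $t$ about the axis $\hat u$. *)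

theory Defs
  imports "HOL-Analysis.Analysis"
begin

text \<open>A frame [x,y,z] is represented by the 3x3 matrix whose columns are its axes.
  Thus the global frame F_g is the identity matrix, a right-handed orthonormal frame
  is exactly a matrix in SO(3), and a rotation R acts on a frame F by R ** F.\<close>

type_synonym vec3 = "real^3"
type_synonym mat3 = "real^3^3"
type_synonym stokes_vec = "real^4"
type_synonym stokes_mat = "real^4^4"

definition SO3 :: "mat3 set" where
  "SO3 = {R. orthogonal_matrix R \<and> det R = 1}"

definition global_frame :: mat3 where
  "global_frame = mat 1"

definition xg :: vec3 where "xg = axis 1 1"
definition yg :: vec3 where "yg = axis 2 1"
definition zg :: vec3 where "zg = axis 3 1"

definition local_frames :: "vec3 \<Rightarrow> mat3 set" where
  "local_frames w = {F. F \<in> SO3 \<and> column 3 F = w}"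

text \<open>Rotation by angle t about the (unit) axis u, right-hand rule (Rodrigues formula).\<close>
definition rot_axis :: "vec3 \<Rightarrow> real \<Rightarrow> mat3" where
  "rot_axis u t = matrix (\<lambda>x. cos t *\<^sub>R x + sin t *\<^sub>R cross3 u x + ((1 - cos t) * (u \<bullet> x)) *\<^sub>R u)"

definition euler :: "real \<Rightarrow> real \<Rightarrow> real \<Rightarrow> mat3" where
  "euler a b c = rot_axis zg a ** rot_axis yg b ** rot_axis zg c"

abbreviation S2 :: "vec3 set" where
  "S2 \<equiv> sphere 0 1"

text \<open>Integral over SO(3) with respect to the measure defined in the paper via Euler angles.\<close>
definition so3_integral :: "(mat3 \<Rightarrow> 'b::{banach,second_countable_topology}) \<Rightarrow> 'b" where
  "so3_integral h =
     set_lebesgue_integral lborel ({0..2*pi} \<times> {0..pi} \<times> {0..2*pi})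
       (\<lambda>p. sin (fst (snd p)) *\<^sub>R h (euler (fst p) (fst (snd p)) (snd (snd p))))"

text \<open>Integral over S^2 with respect to solid angle, via spherical coordinates
  (azimuth a in [0,2pi], polar angle b in [0,pi], Jacobian sin b).\<close>
definition sph :: "real \<Rightarrow> real \<Rightarrow> vec3" where
  "sph a b = vector [cos a * sin b, sin a * sin b, cos b]"

definition sphere_integral :: "(vec3 \<Rightarrow> 'b::{banach,second_countable_topology}) \<Rightarrow> 'b" where
  "sphere_integral h =
     set_lebesgue_integral lborel ({0..2*pi} \<times> {0..pi})
       (\<lambda>p. sin (snd p) *\<^sub>R h (sph (fst p) (snd p)))"

definition Cmat :: "real \<Rightarrow> stokes_mat" where
  "Cmat t = (\<chi> i j.
      if (i = 0 \<and> j = 0) \<or> (i = 3 \<and> j = 3) then 1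
      else if (i = 1 \<and> j = 1) \<or> (i = 2 \<and> j = 2) then cos (2 * t)
      else if i = 1 \<and> j = 2 then sin (2 * t)
      else if i = 2 \<and> j = 1 then - sin (2 * t)
      else 0)"

type_synonym stokes_class = "(stokes_vec \<times> mat3) set"

definition stokes_rel :: "vec3 \<Rightarrow> ((stokes_vec \<times> mat3) \<times> (stokes_vec \<times> mat3)) set" where
  "stokes_rel w = {((s, F), (s', F')). F \<in> local_frames w \<and> F' \<in> local_frames w \<and>
       (\<exists>t. F' = rot_axis w t ** F \<and> s' = Cmat t *v s)}"

definition stokes_space :: "vec3 \<Rightarrow> stokes_class set" where
  "stokes_space w = (UNIV \<times> local_frames w) // stokes_rel w"

definition stokes_cls :: "vec3 \<Rightarrow> stokes_vec \<Rightarrow> mat3 \<Rightarrow> stokes_class" where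
  "stokes_cls w s F = stokes_rel w `` {(s, F)}"

definition comp :: "stokes_class \<Rightarrow> mat3 \<Rightarrow> stokes_vec" where
  "comp c F = (THE s. (s, F) \<in> c)"

definition ref_frame :: "vec3 \<Rightarrow> mat3" where
  "ref_frame w = (SOME F. F \<in> local_frames w)"

definition stokes_add :: "vec3 \<Rightarrow> stokes_class \<Rightarrow> stokes_class \<Rightarrow> stokes_class" where
  "stokes_add w c d = stokes_cls w (comp c (ref_frame w) + comp d (ref_frame w)) (ref_frame w)"

definition stokes_scale :: "vec3 \<Rightarrow> real \<Rightarrow> stokes_class \<Rightarrow> stokes_class" where
  "stokes_scale w a c = stokes_cls w (a *\<^sub>R comp c (ref_frame w)) (ref_frame w)"

definition stokes_linear :: "vec3 \<Rightarrow> vec3 \<Rightarrow> (stokes_class \<Rightarrow> stokes_class) \<Rightarrow> bool" where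
  "stokes_linear wi wo N \<longleftrightarrow>
     (\<forall>c \<in> stokes_space wi. N c \<in> stokes_space wo) \<and>
     (\<forall>c \<in> stokes_space wi. \<forall>d \<in> stokes_space wi.
        N (stokes_add wi c d) = stokes_add wo (N c) (N d)) \<and>
     (\<forall>a. \<forall>c \<in> stokes_space wi. N (stokes_scale wi a c) = stokes_scale wo a (N c))"

definition stokes_sphere_integral :: "vec3 \<Rightarrow> (vec3 \<Rightarrow> stokes_class) \<Rightarrow> stokes_class" where
  "stokes_sphere_integral w h =
     stokes_cls w (sphere_integral (\<lambda>v. comp (h v) (ref_frame w))) (ref_frame w)"

definition stokes_field :: "(vec3 \<Rightarrow> stokes_class) \<Rightarrow> bool" where
  "stokes_field f \<longleftrightarrow> (\<forall>w \<in> S2. f w \<in> stokes_space w)"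

definition mueller_field :: "(vec3 \<Rightarrow> vec3 \<Rightarrow> stokes_class \<Rightarrow> stokes_class) \<Rightarrow> bool" where
  "mueller_field K \<longleftrightarrow> (\<forall>wi \<in> S2. \<forall>wo \<in> S2. stokes_linear wi wo (K wi wo))"

definition mueller_matrix ::
    "vec3 \<Rightarrow> (stokes_class \<Rightarrow> stokes_class) \<Rightarrow> mat3 \<Rightarrow> mat3 \<Rightarrow> stokes_mat" where
  "mueller_matrix wi N Fi Fo = (THE M. \<forall>c \<in> stokes_space wi. comp (N c) Fo = M *v comp c Fi)"

definition induced_op ::
    "(vec3 \<Rightarrow> vec3 \<Rightarrow> stokes_class \<Rightarrow> stokes_class) \<Rightarrow> (vec3 \<Rightarrow> stokes_class) \<Rightarrow> vec3 \<Rightarrow> stokes_class" where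
  "induced_op K f wo = stokes_sphere_integral wo (\<lambda>wi. K wi wo (f wi))"

definition rot_form :: "(vec3 \<Rightarrow> stokes_class) \<Rightarrow> mat3 \<Rightarrow> stokes_vec" where
  "rot_form f R = comp (f (R *v zg)) (R ** global_frame)"

definition rot_form_K ::
    "(vec3 \<Rightarrow> vec3 \<Rightarrow> stokes_class \<Rightarrow> stokes_class) \<Rightarrow> mat3 \<Rightarrow> mat3 \<Rightarrow> stokes_mat" where
  "rot_form_K K Ri Ro =
     mueller_matrix (Ri *v zg) (K (Ri *v zg) (Ro *v zg)) (Ri ** global_frame) (Ro ** global_frame)"

end

theory Submission
  imports Defs
begin

(* Fix R_o and put w_o = R_o z. The Mueller matrix represents K(w_i, w_o) in the frames R_i and
   R_o, so the integrand K(R_i, R_o) f(R_i) equals the component vector [K(w_i, w_o) f(w_i)]^{R_o}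
   with w_i = R_i z. Written in Euler angles R_i = R_z(a) R_y(b) R_z(c), this depends only on
   w_i = sph(a, b); integrating out c yields the factor 2 pi and leaves the solid-angle integral.
   On the other side, the components of the integral of K f in any frame at w_o are the integral of
   the components, because passing from one frame at w_o to another multiplies every component
   vector by the same invertible matrix C(t). *)

section \<open>Rotations and local frames\<close>

lemma SO3_iff_rotation_matrix: "R \<in> SO3 \<longleftrightarrow> rotation_matrix R"
  by (simp add: SO3_def rotation_matrix_def)

lemma SO3_mul: "A \<in> SO3 \<Longrightarrow> B \<in> SO3 \<Longrightarrow> A ** B \<in> SO3"
  by (simp add: SO3_def orthogonal_matrix_mul det_mul)

lemma SO3_transpose: "A \<in> SO3 \<Longrightarrow> transpose A \<in> SO3"
  by (simp add: SO3_def)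

lemma SO3_transpose_mul: "R \<in> SO3 \<Longrightarrow> transpose R ** R = mat 1"
  and SO3_mul_transpose: "R \<in> SO3 \<Longrightarrow> R ** transpose R = mat 1"
  by (simp_all add: SO3_def orthogonal_matrix_def)

lemma SO3_inner:
  assumes "R \<in> SO3"
  shows "(R *v x) \<bullet> (R *v y) = x \<bullet> y"
proof -
  have "orthogonal_transformation ((*v) R)"
    using assms by (simp add: SO3_def orthogonal_transformation_matrix)
  then show ?thesis
    by (simp add: orthogonal_transformation_def)
qed

lemma norm_SO3_zg: "R \<in> SO3 \<Longrightarrow> norm (R *v zg) = 1"
  by (simp add: norm_eq_1 SO3_inner zg_def)

lemma local_frames_iff: "F \<in> local_frames w \<longleftrightarrow> F \<in> SO3 \<and> F *v zg = w"
  by (auto simp: local_frames_def zg_def matrix_vector_mult_basis)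

lemma rot_axis_apply:
  "rot_axis u t *v x = cos t *\<^sub>R x + sin t *\<^sub>R cross3 u x + ((1 - cos t) * (u \<bullet> x)) *\<^sub>R u"
proof -
  have "linear (\<lambda>x. cos t *\<^sub>R x + sin t *\<^sub>R cross3 u x + ((1 - cos t) * (u \<bullet> x)) *\<^sub>R u)"
    by (intro linearI)
      (simp_all add: cross_add_right cross_mult_right inner_add_right algebra_simps)
  then show ?thesis
    unfolding rot_axis_def by (simp add: matrix_works linear_matrix_vector_mul_eq)
qed

lemma rot_axis_0: "rot_axis u 0 = mat 1"
  by (simp add: matrix_eq rot_axis_apply)

lemma rot_axis_zg_apply:
  "rot_axis zg t *v x = vector [cos t * x$1 - sin t * x$2, sin t * x$1 + cos t * x$2, x$3]"
  by (simp add: rot_axis_apply zg_def vec_eq_iff forall_3 cross3_def inner_vec_def sum_3 axis_def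
      vector_def algebra_simps)

lemma rot_axis_yg_apply:
  "rot_axis yg t *v x = vector [cos t * x$1 + sin t * x$3, x$2, cos t * x$3 - sin t * x$1]"
  by (simp add: rot_axis_apply yg_def vec_eq_iff forall_3 cross3_def inner_vec_def sum_3 axis_def
      vector_def algebra_simps)

lemma rot_axis_zg_add: "rot_axis zg s ** rot_axis zg t = rot_axis zg (s + t)"
  by (simp add: matrix_eq matrix_vector_mul_assoc[symmetric] rot_axis_zg_apply vec_eq_iff forall_3
      cos_add sin_add algebra_simps)

lemma rot_axis_zg_eq_1D:
  assumes "rot_axis zg t = mat 1"
  shows "cos t = 1 \<and> sin t = 0"
  using arg_cong[OF assms, of "\<lambda>A. A *v axis 1 1"]
  by (simp add: rot_axis_zg_apply vec_eq_iff forall_3 axis_def)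

lemma entry_eq_apply_axis: "A $ i $ j = (A *v axis j 1) $ i" for A :: "real^'n^'m"
  by (simp add: matrix_vector_mult_basis column_def)

lemma rot_axis_zg_SO3: "rot_axis zg t \<in> SO3"
  unfolding SO3_def mem_Collect_eq orthogonal_matrix det_3
  by (simp add: vec_eq_iff forall_3 matrix_matrix_mult_def sum_3 transpose_def mat_def axis_def
      entry_eq_apply_axis[of "rot_axis zg t"] rot_axis_zg_apply algebra_simps flip: power2_eq_square)

lemma rot_axis_yg_SO3: "rot_axis yg t \<in> SO3"
  unfolding SO3_def mem_Collect_eq orthogonal_matrix det_3
  by (simp add: vec_eq_iff forall_3 matrix_matrix_mult_def sum_3 transpose_def mat_def axis_def
      entry_eq_apply_axis[of "rot_axis yg t"] rot_axis_yg_apply algebra_simps flip: power2_eq_square)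

lemma rot_axis_frame:
  assumes R: "R \<in> SO3"
  shows "rot_axis (R *v zg) t ** R = R ** rot_axis zg t"
proof (rule iffD2[OF matrix_eq], rule allI)
  fix x
  have "cross3 (R *v zg) (R *v x) = R *v cross3 zg x"
    using R by (simp add: cross_rotation_matrix SO3_iff_rotation_matrix)
  then show "(rot_axis (R *v zg) t ** R) *v x = (R ** rot_axis zg t) *v x"
    using SO3_inner[OF R, of zg x]
    by (simp add: matrix_vector_mul_assoc[symmetric] rot_axis_apply matrix_vector_right_distrib
        matrix_vector_mult_scaleR)
qed

lemma SO3_stabilizer_zg:
  assumes G: "G \<in> SO3" and Gz: "G *v zg = zg"
  shows "\<exists>t. G = rot_axis zg t"
proof -
  have "transpose G *v zg = zg"
    using Gz SO3_transpose_mul[OF G] by (metis matrix_vector_mul_assoc matrix_vector_mul_lid)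
  then have col3: "G$1$3 = 0" "G$2$3 = 0" "G$3$3 = 1" and row3: "G$3$1 = 0" "G$3$2 = 0"
    using Gz by (simp_all add: vec_eq_iff forall_3 matrix_vector_mult_def sum_3 zg_def axis_def
        transpose_def)
  have "(transpose G ** G)$1$1 = 1" "(transpose G ** G)$2$2 = 1" "(transpose G ** G)$1$2 = 0"
    using SO3_transpose_mul[OF G] by (simp_all add: mat_def)
  then have orth: "(G$1$1)\<^sup>2 + (G$2$1)\<^sup>2 = 1" "(G$1$2)\<^sup>2 + (G$2$2)\<^sup>2 = 1"
      "G$1$1 * G$1$2 + G$2$1 * G$2$2 = 0"
    using row3 by (simp_all add: matrix_matrix_mult_def sum_3 transpose_def power2_eq_square)
  have "G$1$1 * G$2$2 - G$1$2 * G$2$1 = 1"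
    using G col3 row3 by (simp add: SO3_def det_3 algebra_simps)
  (* orthonormal columns and determinant 1 force the upper left 2x2 block to be a plane rotation *)
  with orth have "(G$2$2 - G$1$1)\<^sup>2 + (G$1$2 + G$2$1)\<^sup>2 = 0"
    by (simp add: power2_eq_square algebra_simps)
  then have diag: "G$2$2 = G$1$1" "G$1$2 = - G$2$1"
    by (smt (verit) sum_power2_eq_zero_iff)+
  obtain t where t: "G$1$1 = cos t" "G$2$1 = sin t"
    using sincos_total_2pi[OF orth(1)] by metis
  have "G *v x = rot_axis zg t *v x" for x
    unfolding rot_axis_zg_apply using col3 row3 diag t
    by (simp add: vec_eq_iff forall_3 matrix_vector_mult_def sum_3 algebra_simps)
  then show ?thesis
    by (metis matrix_eq)
qed

lemma local_frames_rotation: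
  assumes "F \<in> local_frames w" and "F' \<in> local_frames w"
  obtains t where "F' = F ** rot_axis zg t"
proof -
  have F: "F \<in> SO3" and F': "F' \<in> SO3" and eq: "F' *v zg = F *v zg"
    using assms by (auto simp: local_frames_iff)
  have "(transpose F ** F') *v zg = zg"
    using eq SO3_transpose_mul[OF F] by (metis matrix_vector_mul_assoc matrix_vector_mul_lid)
  then obtain t where "transpose F ** F' = rot_axis zg t"
    using SO3_stabilizer_zg SO3_mul SO3_transpose F F' by blast
  then have "F' = F ** rot_axis zg t"
    using SO3_mul_transpose[OF F] by (metis matrix_mul_assoc matrix_mul_lid)
  then show ?thesis ..
qed

lemma euler_SO3: "euler a b c \<in> SO3"
  unfolding euler_def by (intro SO3_mul rot_axis_zg_SO3 rot_axis_yg_SO3)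

lemma euler_zg: "euler a b c *v zg = sph a b"
proof -
  have "rot_axis zg c *v zg = vector [0, 0, 1]"
    unfolding rot_axis_zg_apply by (simp add: zg_def axis_def)
  moreover have "rot_axis yg b *v vector [0, 0, 1] = vector [sin b, 0, cos b]"
    unfolding rot_axis_yg_apply by simp
  ultimately show ?thesis
    by (simp add: euler_def sph_def matrix_vector_mul_assoc[symmetric] rot_axis_zg_apply
        algebra_simps)
qed

lemma sph_in_S2: "sph a b \<in> S2"
  using norm_SO3_zg[OF euler_SO3] by (simp add: euler_zg)

section \<open>Stokes spaces and Mueller matrices\<close>

lemma Cmat_apply:
  "Cmat t *v s = (\<chi> i. if i = 1 then cos (2*t) * s$1 + sin (2*t) * s$2
     else if i = 2 then cos (2*t) * s$2 - sin (2*t) * s$1 else s$i)"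
  by (simp add: vec_eq_iff forall_4 matrix_vector_mult_def sum_4 Cmat_def)

lemma Cmat_add: "Cmat s ** Cmat t = Cmat (s + t)"
  by (simp add: matrix_eq matrix_vector_mul_assoc[symmetric] Cmat_apply vec_eq_iff forall_4
      distrib_left cos_add sin_add algebra_simps)

lemma Cmat_0: "Cmat 0 = mat 1"
  by (simp add: matrix_eq Cmat_apply vec_eq_iff forall_4)

lemma Cmat_eq_1: "cos t = 1 \<Longrightarrow> sin t = 0 \<Longrightarrow> Cmat t = mat 1"
  by (simp add: matrix_eq Cmat_apply vec_eq_iff forall_4 cos_double sin_double)

lemma invertible_Cmat: "invertible (Cmat t)"
  unfolding invertible_def using Cmat_add[of t "-t"] Cmat_add[of "-t" t] by (auto simp: Cmat_0)

lemma stokes_rel_iff: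
  "((s, F), (s', F')) \<in> stokes_rel w \<longleftrightarrow>
     F \<in> local_frames w \<and> F' \<in> local_frames w \<and>
     (\<exists>t. F' = F ** rot_axis zg t \<and> s' = Cmat t *v s)"
proof -
  have "rot_axis w t ** F = F ** rot_axis zg t" if "F \<in> local_frames w" for t
    using that rot_axis_frame[of F t] by (simp add: local_frames_iff)
  then show ?thesis
    unfolding stokes_rel_def by auto
qed

lemma stokes_rel_refl: "F \<in> local_frames w \<Longrightarrow> ((s, F), (s, F)) \<in> stokes_rel w"
  unfolding stokes_rel_iff by (metis rot_axis_0 Cmat_0 matrix_mul_rid matrix_vector_mul_lid)

lemma equiv_stokes_rel: "equiv (UNIV \<times> local_frames w) (stokes_rel w)"
proof (rule equivI)
  show "stokes_rel w \<subseteq> (UNIV \<times> local_frames w) \<times> (UNIV \<times> local_frames w)"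
    by (auto simp: stokes_rel_iff)
  show "refl_on (UNIV \<times> local_frames w) (stokes_rel w)"
    unfolding refl_on_def by (auto intro: stokes_rel_refl)
  show "sym (stokes_rel w)"
  proof (rule symI, clarify)
    fix s F s' F' assume "((s, F), (s', F')) \<in> stokes_rel w"
    then obtain t where lf: "F \<in> local_frames w" "F' \<in> local_frames w"
      and t: "F' = F ** rot_axis zg t" "s' = Cmat t *v s"
      by (auto simp: stokes_rel_iff)
    have "F = F' ** rot_axis zg (- t)"
      by (simp add: t matrix_mul_assoc[symmetric] rot_axis_zg_add rot_axis_0)
    moreover have "s = Cmat (- t) *v s'"
      by (simp add: t matrix_vector_mul_assoc Cmat_add Cmat_0)
    ultimately show "((s', F'), (s, F)) \<in> stokes_rel w"
      using lf by (auto simp: stokes_rel_iff)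
  qed
  show "trans (stokes_rel w)"
  proof (rule transI, clarify)
    fix s F s' F' s'' F''
    assume "((s, F), (s', F')) \<in> stokes_rel w" "((s', F'), (s'', F'')) \<in> stokes_rel w"
    then obtain t u where lf: "F \<in> local_frames w" "F'' \<in> local_frames w"
      and t: "F' = F ** rot_axis zg t" "s' = Cmat t *v s"
      and u: "F'' = F' ** rot_axis zg u" "s'' = Cmat u *v s'"
      by (auto simp: stokes_rel_iff)
    have "F'' = F ** rot_axis zg (t + u)"
      by (simp add: t u matrix_mul_assoc[symmetric] rot_axis_zg_add)
    moreover have "s'' = Cmat (t + u) *v s"
      by (simp add: t u matrix_vector_mul_assoc Cmat_add add.commute)
    ultimately show "((s, F), (s'', F'')) \<in> stokes_rel w"
      using lf by (auto simp: stokes_rel_iff)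
  qed
qed

lemma stokes_rel_same_frame:
  assumes "((s, F), (s', F)) \<in> stokes_rel w"
  shows "s' = s"
proof -
  obtain t where F: "F \<in> local_frames w" and t: "F = F ** rot_axis zg t" "s' = Cmat t *v s"
    using assms by (auto simp: stokes_rel_iff)
  have "transpose F ** F = mat 1"
    using F by (simp add: local_frames_iff SO3_transpose_mul)
  then have "rot_axis zg t = mat 1"
    using arg_cong[OF t(1), of "(**) (transpose F)"] by (metis matrix_mul_assoc matrix_mul_lid)
  then show ?thesis
    using t(2) rot_axis_zg_eq_1D Cmat_eq_1 by simp
qed

lemma stokes_space_ex1_component:
  assumes c: "c \<in> stokes_space w" and F: "F \<in> local_frames w"
  shows "\<exists>!s. (s, F) \<in> c"
proof -
  have c': "c \<in> (UNIV \<times> local_frames w) // stokes_rel w"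
    using c by (simp add: stokes_space_def)
  then obtain s0 F0 where F0: "F0 \<in> local_frames w" and c_eq: "c = stokes_rel w `` {(s0, F0)}"
    by (auto elim!: quotientE)
  obtain t where "F = F0 ** rot_axis zg t"
    using local_frames_rotation[OF F0 F] .
  then have "(Cmat t *v s0, F) \<in> c"
    using F0 F by (auto simp: c_eq stokes_rel_iff)
  moreover have "s' = s" if "(s, F) \<in> c" "(s', F) \<in> c" for s s'
  proof -
    have "((s, F), (s', F)) \<in> stokes_rel w"
      using quotient_eq_iff[OF equiv_stokes_rel c' c' that] by simp
    then show ?thesis
      by (rule stokes_rel_same_frame)
  qed
  ultimately show ?thesis by blast
qed

lemma comp_in_class: "c \<in> stokes_space w \<Longrightarrow> F \<in> local_frames w \<Longrightarrow> (comp c F, F) \<in> c"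
  unfolding comp_def by (rule theI'[OF stokes_space_ex1_component])

lemma comp_eqI:
  "c \<in> stokes_space w \<Longrightarrow> F \<in> local_frames w \<Longrightarrow> (s, F) \<in> c \<Longrightarrow> comp c F = s"
  unfolding comp_def by (rule the1_equality[OF stokes_space_ex1_component])

lemma stokes_cls_in_space: "F \<in> local_frames w \<Longrightarrow> stokes_cls w s F \<in> stokes_space w"
  unfolding stokes_cls_def stokes_space_def by (rule quotientI) simp

lemma comp_stokes_cls: "F \<in> local_frames w \<Longrightarrow> comp (stokes_cls w s F) F = s"
  by (rule comp_eqI[OF stokes_cls_in_space]) (auto simp: stokes_cls_def intro: stokes_rel_refl)

lemma stokes_space_eqI:
  assumes c: "c \<in> stokes_space w" and d: "d \<in> stokes_space w" and F: "F \<in> local_frames w"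
    and eq: "comp c F = comp d F"
  shows "c = d"
proof -
  have "(comp c F, F) \<in> c \<inter> d"
    using comp_in_class[OF c F] comp_in_class[OF d F] eq by simp
  then show ?thesis
    using quotient_disj[OF equiv_stokes_rel] c d unfolding stokes_space_def by blast
qed

lemma stokes_cls_comp:
  assumes "c \<in> stokes_space w" and "F \<in> local_frames w"
  shows "stokes_cls w (comp c F) F = c"
  using assms by (intro stokes_space_eqI[OF stokes_cls_in_space _ assms(2)])
    (simp_all add: comp_stokes_cls)

lemma comp_change_frame:
  assumes F: "F \<in> local_frames w" and F': "F' \<in> local_frames w"
  obtains t where "\<And>c. c \<in> stokes_space w \<Longrightarrow> comp c F' = Cmat t *v comp c F"
proof -
  obtain t where t: "F' = F ** rot_axis zg t"
    using local_frames_rotation[OF F F'] .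
  have "comp c F' = Cmat t *v comp c F" if c: "c \<in> stokes_space w" for c
  proof (rule comp_eqI[OF c F'])
    have "((comp c F, F), (Cmat t *v comp c F, F')) \<in> stokes_rel w"
      using F F' t by (auto simp: stokes_rel_iff)
    then show "(Cmat t *v comp c F, F') \<in> c"
      using in_quotient_imp_closed[OF equiv_stokes_rel] c comp_in_class[OF c F]
      unfolding stokes_space_def by blast
  qed
  then show ?thesis using that by blast
qed

lemma ref_frame_in_local_frames: "F \<in> local_frames w \<Longrightarrow> ref_frame w \<in> local_frames w"
  unfolding ref_frame_def by (rule someI)

lemma comp_stokes_add:
  assumes "c \<in> stokes_space w" "d \<in> stokes_space w" "F \<in> local_frames w"
  shows "comp (stokes_add w c d) F = comp c F + comp d F"
proof -
  have r: "ref_frame w \<in> local_frames w"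
    using assms(3) by (rule ref_frame_in_local_frames)
  obtain t where "\<And>c. c \<in> stokes_space w \<Longrightarrow> comp c F = Cmat t *v comp c (ref_frame w)"
    using comp_change_frame[OF r assms(3)] by blast
  then show ?thesis
    using assms stokes_cls_in_space[OF r] comp_stokes_cls[OF r]
    by (simp add: stokes_add_def matrix_vector_right_distrib)
qed

lemma comp_stokes_scale:
  assumes "c \<in> stokes_space w" "F \<in> local_frames w"
  shows "comp (stokes_scale w a c) F = a *\<^sub>R comp c F"
proof -
  have r: "ref_frame w \<in> local_frames w"
    using assms(2) by (rule ref_frame_in_local_frames)
  obtain t where "\<And>c. c \<in> stokes_space w \<Longrightarrow> comp c F = Cmat t *v comp c (ref_frame w)"
    using comp_change_frame[OF r assms(2)] by blast
  then show ?thesis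
    using assms stokes_cls_in_space[OF r] comp_stokes_cls[OF r]
    by (simp add: stokes_scale_def matrix_vector_mult_scaleR)
qed

lemma stokes_add_cls:
  assumes "F \<in> local_frames w"
  shows "stokes_add w (stokes_cls w x F) (stokes_cls w y F) = stokes_cls w (x + y) F"
proof -
  have "stokes_add w (stokes_cls w x F) (stokes_cls w y F) \<in> stokes_space w"
    using assms ref_frame_in_local_frames by (simp add: stokes_add_def stokes_cls_in_space)
  moreover have "comp (stokes_add w (stokes_cls w x F) (stokes_cls w y F)) F = x + y"
    using comp_stokes_add[OF stokes_cls_in_space stokes_cls_in_space assms] assms
    by (simp add: comp_stokes_cls)
  ultimately show ?thesis
    using assms by (intro stokes_space_eqI[OF _ stokes_cls_in_space assms])
      (simp_all add: comp_stokes_cls)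
qed

lemma stokes_scale_cls:
  assumes "F \<in> local_frames w"
  shows "stokes_scale w a (stokes_cls w x F) = stokes_cls w (a *\<^sub>R x) F"
proof -
  have "stokes_scale w a (stokes_cls w x F) \<in> stokes_space w"
    using assms ref_frame_in_local_frames by (simp add: stokes_scale_def stokes_cls_in_space)
  moreover have "comp (stokes_scale w a (stokes_cls w x F)) F = a *\<^sub>R x"
    using comp_stokes_scale[OF stokes_cls_in_space assms] assms
    by (simp add: comp_stokes_cls)
  ultimately show ?thesis
    using assms by (intro stokes_space_eqI[OF _ stokes_cls_in_space assms])
      (simp_all add: comp_stokes_cls)
qed

lemma linear_comp_stokes_linear:
  assumes N: "stokes_linear wi wo N" and Fi: "Fi \<in> local_frames wi" and Fo: "Fo \<in> local_frames wo"
  shows "linear (\<lambda>s. comp (N (stokes_cls wi s Fi)) Fo)"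
proof (rule linearI)
  have cls: "stokes_cls wi s Fi \<in> stokes_space wi" for s
    using Fi by (rule stokes_cls_in_space)
  have into: "N c \<in> stokes_space wo" if "c \<in> stokes_space wi" for c
    using N that by (simp add: stokes_linear_def)
  show "comp (N (stokes_cls wi (x + y) Fi)) Fo =
      comp (N (stokes_cls wi x Fi)) Fo + comp (N (stokes_cls wi y Fi)) Fo" for x y
    using N cls into Fo by (simp add: stokes_linear_def comp_stokes_add flip: stokes_add_cls[OF Fi])
  show "comp (N (stokes_cls wi (a *\<^sub>R x) Fi)) Fo = a *\<^sub>R comp (N (stokes_cls wi x Fi)) Fo" for a x
    using N cls into Fo
    by (simp add: stokes_linear_def comp_stokes_scale flip: stokes_scale_cls[OF Fi])
qed

lemma mueller_matrix_apply:
  assumes N: "stokes_linear wi wo N" and Fi: "Fi \<in> local_frames wi" and Fo: "Fo \<in> local_frames wo"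
    and c: "c \<in> stokes_space wi"
  shows "mueller_matrix wi N Fi Fo *v comp c Fi = comp (N c) Fo"
proof -
  define L where "L s = comp (N (stokes_cls wi s Fi)) Fo" for s
  have "linear L"
    unfolding L_def using N Fi Fo by (rule linear_comp_stokes_linear)
  then have L: "matrix L *v s = L s" for s
    by (simp add: matrix_works linear_matrix_vector_mul_eq)
  have works: "\<forall>d \<in> stokes_space wi. comp (N d) Fo = matrix L *v comp d Fi"
    by (simp add: L L_def stokes_cls_comp Fi)
  have "M = matrix L" if "\<forall>d \<in> stokes_space wi. comp (N d) Fo = M *v comp d Fi" for M
  proof -
    have "M *v s = matrix L *v s" for s
      using that works stokes_cls_in_space[OF Fi, of s] comp_stokes_cls[OF Fi, of s] by metis
    then show ?thesis by (simp add: matrix_eq)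
  qed
  then have "mueller_matrix wi N Fi Fo = matrix L"
    unfolding mueller_matrix_def using works by (rule the_equality[rotated])
  then show ?thesis
    using works c by simp
qed

section \<open>Integrals over SO(3) and the sphere\<close>

lemma emeasure_lborel_Times:
  fixes A :: "'a::euclidean_space set" and B :: "'b::euclidean_space set"
  assumes "A \<in> sets borel" "B \<in> sets borel"
  shows "emeasure lborel (A \<times> B) = emeasure lborel A * emeasure lborel B"
  using assms lborel.emeasure_pair_measure_Times[of A lborel B] by (simp add: lborel_prod)

lemma distr_lborel_reassoc:
  "distr lborel lborel (\<lambda>p. (fst (fst p), snd (fst p), snd p)) =
    (lborel :: ('a::euclidean_space \<times> 'b::euclidean_space \<times> 'c::euclidean_space) measure)"
  (is "distr lborel lborel ?T = _")
proof (rule lborel_eqI[symmetric])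
  have T: "?T \<in> measurable lborel lborel"
    unfolding measurable_lborel1 measurable_lborel2
    by (intro borel_measurable_continuous_onI continuous_intros)
  fix l u :: "'a \<times> 'b \<times> 'c"
  assume le: "\<And>b. b \<in> Basis \<Longrightarrow> l \<bullet> b \<le> u \<bullet> b"
  obtain l1 l2 l3 u1 u2 u3 where lu: "l = (l1, l2, l3)" "u = (u1, u2, u3)"
    by (cases l rule: prod_cases3, cases u rule: prod_cases3)
  have box: "box l u = box l1 u1 \<times> box l2 u2 \<times> box l3 u3"
    by (simp add: lu box_prod)
  have "?T -` box l u \<inter> space lborel = (box l1 u1 \<times> box l2 u2) \<times> box l3 u3"
    by (auto simp: box)
  then have "emeasure (distr lborel lborel ?T) (box l u) =
      emeasure lborel ((box l1 u1 \<times> box l2 u2) \<times> box l3 u3)"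
    by (simp add: emeasure_distr[OF T])
  also have "\<dots> = emeasure lborel (box l u)"
  proof -
    have "box l1 u1 \<in> sets borel" "box l2 u2 \<in> sets borel" "box l3 u3 \<in> sets borel"
      "box l1 u1 \<times> box l2 u2 \<in> sets borel" "box l2 u2 \<times> box l3 u3 \<in> sets borel"
      by (auto intro!: borel_open open_Times)
    then show ?thesis
      by (simp add: box emeasure_lborel_Times mult.assoc)
  qed
  also have "\<dots> = (\<Prod>b\<in>Basis. (u - l) \<bullet> b)"
    using le by (rule emeasure_lborel_box)
  finally show "emeasure (distr lborel lborel ?T) (box l u) = (\<Prod>b\<in>Basis. (u - l) \<bullet> b)" .
qed simp

lemma integral_lborel_reassoc:
  fixes F :: "'a::euclidean_space \<times> 'b::euclidean_space \<times> 'c::euclidean_space \<Rightarrow>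
    'd::{banach,second_countable_topology}"
  shows "integral\<^sup>L lborel F = (\<integral>p. F (fst (fst p), snd (fst p), snd p) \<partial>lborel)"
proof -
  let ?T = "\<lambda>p::('a \<times> 'b) \<times> 'c. (fst (fst p), snd (fst p), snd p)"
  let ?S = "\<lambda>q::'a \<times> 'b \<times> 'c. ((fst q, fst (snd q)), snd (snd q))"
  have T: "?T \<in> measurable lborel lborel" and S: "?S \<in> measurable lborel lborel"
    unfolding measurable_lborel1 measurable_lborel2
    by (intro borel_measurable_continuous_onI continuous_intros)+
  show ?thesis
  proof (cases "F \<in> borel_measurable lborel")
    case True
    have "integral\<^sup>L lborel F = integral\<^sup>L (distr lborel lborel ?T) F"
      by (simp add: distr_lborel_reassoc)
    also have "\<dots> = (\<integral>p. F (?T p) \<partial>lborel)"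
      by (rule integral_distr[OF T True])
    finally show ?thesis .
  next
    case False
    have "(\<lambda>p. F (?T p)) \<notin> borel_measurable lborel"
    proof
      assume "(\<lambda>p. F (?T p)) \<in> borel_measurable lborel"
      then have "(\<lambda>q. F (?T (?S q))) \<in> borel_measurable lborel"
        by (rule measurable_compose[OF S])
      with False show False
        by simp
    qed
    with False have "\<not> integrable lborel F" "\<not> integrable lborel (\<lambda>p. F (?T p))"
      using borel_measurable_integrable by blast+
    then show ?thesis
      by (simp add: not_integrable_integral_eq)
  qed
qed

lemma (in pair_sigma_finite) integral_indicator_snd_scaleR:
  fixes G :: "'a \<Rightarrow> 'c::{banach,second_countable_topology}"
  assumes pos: "0 < measure M2 C"
  shows "(\<integral>p. indicator C (snd p) *\<^sub>R G (fst p) \<partial>(M1 \<Otimes>\<^sub>M M2)) =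
    measure M2 C *\<^sub>R integral\<^sup>L M1 G"
proof -
  let ?\<Phi> = "\<lambda>p. indicator C (snd p) *\<^sub>R G (fst p)"
  have C: "C \<in> sets M2"
    using pos measure_notin_sets by fastforce
  have fin: "emeasure M2 C < \<infinity>"
    using pos measure_zero_top less_top by fastforce
  have inner: "(\<integral>c. ?\<Phi> (x, c) \<partial>M2) = measure M2 C *\<^sub>R G x" for x
    using C fin sets.sets_into_space[OF C] by (simp add: Int_absorb2)
  show ?thesis
  proof (cases "integrable M1 G")
    case True
    have "integrable (M1 \<Otimes>\<^sub>M M2) ?\<Phi>"
    proof (rule Fubini_integrable)
      show "?\<Phi> \<in> borel_measurable (M1 \<Otimes>\<^sub>M M2)"
        using True C by measurable
      show "integrable M1 (\<lambda>x. \<integral>c. norm (?\<Phi> (x, c)) \<partial>M2)"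
        using True C fin sets.sets_into_space[OF C] by (simp add: Int_absorb2)
      show "AE x in M1. integrable M2 (\<lambda>c. ?\<Phi> (x, c))"
        using C fin by simp
    qed
    then have "(\<integral>p. ?\<Phi> p \<partial>(M1 \<Otimes>\<^sub>M M2)) = (\<integral>x. (\<integral>c. ?\<Phi> (x, c) \<partial>M2) \<partial>M1)"
      by (rule integral_fst'[symmetric])
    then show ?thesis
      by (simp only: inner integral_scaleR_right)
  next
    case False
    have "\<not> integrable (M1 \<Otimes>\<^sub>M M2) ?\<Phi>"
    proof
      assume "integrable (M1 \<Otimes>\<^sub>M M2) ?\<Phi>"
      from integrable_fst'[OF this] have "integrable M1 (\<lambda>x. measure M2 C *\<^sub>R G x)"
        by (simp only: inner)
      then have "integrable M1 (\<lambda>x. inverse (measure M2 C) *\<^sub>R (measure M2 C *\<^sub>R G x))"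
        by (rule integrable_scaleR_right)
      then show False
        using False pos by simp
    qed
    then show ?thesis
      using False by (simp add: not_integrable_integral_eq)
  qed
qed

lemma so3_integral_eq_sphere_integral:
  fixes X :: "mat3 \<Rightarrow> 'b::{banach,second_countable_topology}"
  assumes "\<And>a b c. X (euler a b c) = h (sph a b)"
  shows "so3_integral X = (2 * pi) *\<^sub>R sphere_integral h"
proof -
  let ?g = "\<lambda>q. indicator ({0..2*pi} \<times> {0..pi}) q *\<^sub>R (sin (snd q) *\<^sub>R h (sph (fst q) (snd q)))"
  have "so3_integral X = (\<integral>p. indicator {0..2*pi} (snd p) *\<^sub>R ?g (fst p) \<partial>lborel)"
    unfolding so3_integral_def set_lebesgue_integral_def assms
    by (subst integral_lborel_reassoc) (simp add: indicator_times mult_ac)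
  also have "\<dots> = (2 * pi) *\<^sub>R integral\<^sup>L lborel ?g"
    using lborel_pair.integral_indicator_snd_scaleR[of "{0..2*pi}" ?g] by (simp add: lborel_prod)
  finally show ?thesis
    unfolding sphere_integral_def set_lebesgue_integral_def .
qed

lemma sphere_integral_cong:
  assumes "\<And>v. v \<in> S2 \<Longrightarrow> g v = g' v"
  shows "sphere_integral g = sphere_integral g'"
  using assms sph_in_S2 by (simp add: sphere_integral_def)

lemma sphere_integral_matrix_mult:
  fixes A :: "real^'n^'m"
  assumes "invertible A"
  shows "sphere_integral (\<lambda>v. A *v h v) = A *v sphere_integral h"
proof -
  obtain B where "B ** A = mat 1"
    using assms by (auto simp: invertible_def)
  then have "B *v (A *v x) = x" for x
    by (simp add: matrix_vector_mul_assoc)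
  then show ?thesis
    unfolding sphere_integral_def set_lebesgue_integral_def
    by (subst integral_bounded_linear'[where T = "(*v) A" and T' = "(*v) B", symmetric])
      (simp_all add: matrix_vector_mult_scaleR)
qed

lemma comp_stokes_sphere_integral:
  assumes F: "F \<in> local_frames w" and h: "\<And>v. v \<in> S2 \<Longrightarrow> h v \<in> stokes_space w"
  shows "comp (stokes_sphere_integral w h) F = sphere_integral (\<lambda>v. comp (h v) F)"
proof -
  have r: "ref_frame w \<in> local_frames w"
    using F by (rule ref_frame_in_local_frames)
  obtain t where t: "\<And>c. c \<in> stokes_space w \<Longrightarrow> comp c F = Cmat t *v comp c (ref_frame w)"
    using comp_change_frame[OF r F] by blast
  have "comp (stokes_sphere_integral w h) F =
      Cmat t *v sphere_integral (\<lambda>v. comp (h v) (ref_frame w))"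
    using t[OF stokes_cls_in_space[OF r]]
    by (simp add: stokes_sphere_integral_def comp_stokes_cls[OF r])
  also have "\<dots> = sphere_integral (\<lambda>v. Cmat t *v comp (h v) (ref_frame w))"
    by (rule sphere_integral_matrix_mult[OF invertible_Cmat, symmetric])
  also have "\<dots> = sphere_integral (\<lambda>v. comp (h v) F)"
    using t h by (intro sphere_integral_cong) simp
  finally show ?thesis .
qed

theorem mainTheorem6:
  fixes f :: "vec3 \<Rightarrow> stokes_class"
    and K :: "vec3 \<Rightarrow> vec3 \<Rightarrow> stokes_class \<Rightarrow> stokes_class"
  assumes "stokes_field f"
    and "mueller_field K"
  shows "\<forall>Ro \<in> SO3. rot_form (induced_op K f) Ro =
           (1 / (2 * pi)) *\<^sub>R so3_integral (\<lambda>Ri. rot_form_K K Ri Ro *v rot_form f Ri)"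
proof
  fix Ro assume Ro: "Ro \<in> SO3"
  define wo where "wo = Ro *v zg"
  have Ro_frame: "Ro \<in> local_frames wo"
    using Ro by (simp add: local_frames_iff wo_def)
  have f: "f v \<in> stokes_space v" and K: "stokes_linear v wo (K v wo)" if "v \<in> S2" for v
    using assms that norm_SO3_zg[OF Ro] by (auto simp: stokes_field_def mueller_field_def wo_def)
  have global_frame: "R ** global_frame = R" for R
    by (simp add: global_frame_def)
  have "rot_form (induced_op K f) Ro = sphere_integral (\<lambda>v. comp (K v wo (f v)) Ro)"
    unfolding rot_form_def induced_op_def global_frame wo_def[symmetric]
    using Ro_frame f K by (intro comp_stokes_sphere_integral) (auto simp: stokes_linear_def)
  moreover have "rot_form_K K (euler a b c) Ro *v rot_form f (euler a b c) =
      comp (K (sph a b) wo (f (sph a b))) Ro" for a b c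
    unfolding rot_form_K_def rot_form_def global_frame euler_zg wo_def[symmetric]
    using K f sph_in_S2 euler_SO3 Ro_frame
    by (intro mueller_matrix_apply) (auto simp: local_frames_iff euler_zg)
  then have "so3_integral (\<lambda>Ri. rot_form_K K Ri Ro *v rot_form f Ri) =
      (2 * pi) *\<^sub>R sphere_integral (\<lambda>v. comp (K v wo (f v)) Ro)"
    by (rule so3_integral_eq_sphere_integral)
  ultimately show "rot_form (induced_op K f) Ro =
      (1 / (2 * pi)) *\<^sub>R so3_integral (\<lambda>Ri. rot_form_K K Ri Ro *v rot_form f Ri)"
    by simp
qed

end
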